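(* For integers $N\ge1$ and $n\ge2$ let $$\Sigma_2(n,N)=\sum_{(k,r,s)\in B_{m}\setminus B_{N\sqrt n}}\binom{2n}{n+\frac12krs}\binom{2n}{n+\frac14\left(kr^2+ks^2+(-1)^{\frac{k+1}{2}}\right)},\qquad m=5\sqrt{n\log n}.$$ Then $$\lim_{N\to\infty}\limsup_{n\to\infty}\frac{\Sigma_2(n,N)}{16^n\log n/\sqrt n}=0.$$
   Context: For real $t>0$, $B_t$ is the set of triples $(k,r,s)\in\mathbf Z^3$ with $k>0$ odd, $r>s>0$, $\gcd(r,s)=1$, $r\not\equiv s\pmod 2$, and $k(r^2+s^2)\le t$. Convention: $\binom{a}{b}=0$ if $b>a$. *)

theory Defs
  imports "HOL-Analysis.Analysis"
begin

definition B :: "real \<Rightarrow> (int \<times> int \<times> int) set" where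
  "B t = {(k, r, s). k > 0 \<and> odd k \<and> r > s \<and> s > 0 \<and> gcd r s = 1 \<and>
                     r mod 2 \<noteq> s mod 2 \<and> real_of_int (k * (r^2 + s^2)) \<le> t}"

definition binom :: "nat \<Rightarrow> int \<Rightarrow> nat" where
  "binom a b = (if 0 \<le> b \<and> b \<le> int a then a choose nat b else 0)"

text \<open>The summand. The quantities krs/2 and (kr^2+ks^2+(-1)^((k+1)/2))/4 are integers
  on B_t, so exact integer division is used.\<close>
definition Sigma2 :: "nat \<Rightarrow> nat \<Rightarrow> real" where
  "Sigma2 n N =
     (\<Sum>(k, r, s) \<in> B (5 * sqrt (real n * ln (real n))) - B (real N * sqrt (real n)).
        real (binom (2 * n) (int n + (k * r * s) div 2)) *
        real (binom (2 * n) (int n + (k * r^2 + k * s^2 + (-1) ^ nat ((k + 1) div 2)) div 4)))"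

end

theory Submission
  imports Defs "HOL-Real_Asymp.Real_Asymp"
begin

(*
  On B m - B (N sqrt n) we have T = k (r^2 + s^2) > N sqrt n, and the lower index of the second
  binomial coefficient lies at least T/5 above the centre n.  The bounds
  C(2n, n) <= 4^n / sqrt n  and  C(2n, n + j) <= C(2n, n) exp (-j^2 / 2n)  therefore bound each
  summand by  16^n / n * exp (-N^2/100) * exp (-c T)  with  c = N / (100 sqrt n).  Summing
  exp (-c k r^2) over r costs O(1 / sqrt (c k)), so the sum over r and s is O(1 / (c k)) and the sum
  over k <= m is O(log m / c) = O(sqrt n log n / N).  Hence, for all large n, the normalised sum is
  at most 800 exp (-N^2/100) / N, which tends to 0 as N grows.
*)

lemma central_binomial_Suc:
  "Suc n * ((2 * Suc n) choose Suc n) = 2 * (2 * n + 1) * ((2 * n) choose n)"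
proof -
  have upper: "Suc n * ((2 * Suc n) choose Suc n) = 2 * Suc n * (Suc (2 * n) choose n)"
    using Suc_times_binomial[of n "Suc (2 * n)"] by simp
  have "Suc (2 * n) choose n = Suc (2 * n) choose Suc n"
    by (subst binomial_symmetric) auto
  then have lower: "Suc n * (Suc (2 * n) choose n) = Suc (2 * n) * ((2 * n) choose n)"
    using Suc_times_binomial[of n "2 * n"] by simp
  have "Suc n * (Suc n * ((2 * Suc n) choose Suc n)) = 2 * Suc n * (Suc n * (Suc (2 * n) choose n))"
    unfolding upper by (simp only: ac_simps)
  also have "\<dots> = Suc n * (2 * (2 * n + 1) * ((2 * n) choose n))"
    unfolding lower by simp
  finally show ?thesis by (simp only: mult_cancel1 nat.distinct(2) simp_thms)
qed

(* The weight 3n + 1 (rather than n) is what makes the induction step close: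
   (2n + 1)^2 (3n + 4) <= 4 (n + 1)^2 (3n + 1). *)
lemma central_binomial_sq_le: "((2 * n) choose n)^2 * (3 * n + 1) \<le> 16 ^ n"
proof (induction n)
  case 0 then show ?case by simp
next
  case (Suc n)
  define c where "c = (2 * n) choose n"
  have "(Suc n)^2 * (((2 * Suc n) choose Suc n)^2 * (3 * Suc n + 1))
      = (2 * (2 * n + 1))^2 * (3 * Suc n + 1) * c^2"
    by (metis central_binomial_Suc c_def power_mult_distrib mult.commute mult.assoc)
  also have "\<dots> \<le> 16 * (3 * n + 1) * (Suc n)^2 * c^2"
    by (intro mult_right_mono) (auto simp: power2_eq_square algebra_simps)
  also have "\<dots> = (Suc n)^2 * 16 * (c^2 * (3 * n + 1))"
    by (simp add: algebra_simps)
  also have "\<dots> \<le> (Suc n)^2 * 16 * 16 ^ n"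
    using Suc.IH by (intro mult_left_mono) (auto simp: c_def)
  finally show ?case by simp
qed

lemma central_binomial_le:
  assumes "n \<ge> 1"
  shows "real ((2 * n) choose n) \<le> 4 ^ n / sqrt (real n)"
proof -
  define c where "c = real ((2 * n) choose n)"
  have "c^2 * real n \<le> c^2 * (3 * real n + 1)"
    by (intro mult_left_mono) auto
  also have "\<dots> \<le> 16 ^ n"
  proof -
    have "real (((2 * n) choose n)^2 * (3 * n + 1)) \<le> real (16 ^ n)"
      by (simp only: of_nat_le_iff central_binomial_sq_le)
    then show ?thesis by (simp add: c_def algebra_simps)
  qed
  also have "(16::real) ^ n = (4 ^ n)^2"
    by (simp flip: power_mult_distrib power_mult add: power2_eq_square)
  finally have "sqrt (c^2 * real n) \<le> sqrt ((4 ^ n)^2)"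
    by (rule real_sqrt_le_mono)
  then show ?thesis
    using assms by (simp add: real_sqrt_mult c_def pos_le_divide_eq del: real_sqrt_le_iff)
qed

lemma binomial_Suc_ratio: "Suc k * (m choose Suc k) = (m - k) * (m choose k)"
  using binomial_absorption[of k m] binomial_absorb_comp[of m k] by simp

lemma binomial_ratio_le_exp:
  assumes "real j + 1 \<le> real n"
  shows "(real n - real j) / (real n + real j + 1) \<le> exp (- (2 * real j + 1) / (2 * real n))"
proof -
  have "(real n - real j) / (real n + real j + 1) = 1 + (- (2 * real j + 1) / (real n + real j + 1))"
    by (simp add: field_simps)
  also have "\<dots> \<le> exp (- (2 * real j + 1) / (real n + real j + 1))"
    by (rule exp_ge_add_one_self)
  also have "\<dots> \<le> exp (- (2 * real j + 1) / (2 * real n))"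
    using assms by (intro exp_mono) (simp add: divide_simps)
  finally show ?thesis .
qed

lemma binomial_gaussian_decay:
  assumes n: "n \<ge> 1"
  shows "real ((2 * n) choose (n + j))
           \<le> real ((2 * n) choose n) * exp (- ((real j)^2 / (2 * real n)))"
proof (induction j)
  case 0 then show ?case by simp
next
  case (Suc j)
  show ?case
  proof (cases "n + Suc j \<le> 2 * n")
    case False
    then show ?thesis by (simp add: binomial_eq_0)
  next
    case True
    then have jn: "real j + 1 \<le> real n" by simp
    have "Suc (n + j) * ((2 * n) choose Suc (n + j)) = (n - j) * ((2 * n) choose (n + j))"
      using binomial_Suc_ratio[of "n + j" "2 * n"] by simp
    then have "real (Suc (n + j)) * real ((2 * n) choose Suc (n + j))
        = real (n - j) * real ((2 * n) choose (n + j))"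
      by (metis of_nat_mult)
    then have "real ((2 * n) choose (n + Suc j))
        = (real n - real j) / (real n + real j + 1) * real ((2 * n) choose (n + j))"
      using jn by (simp add: field_simps of_nat_diff)
    also have "\<dots> \<le> exp (- (2 * real j + 1) / (2 * real n)) *
                    (real ((2 * n) choose n) * exp (- ((real j)^2 / (2 * real n))))"
      using binomial_ratio_le_exp[OF jn] Suc.IH jn by (intro mult_mono) auto
    also have "\<dots> = real ((2 * n) choose n) * exp (- ((real (Suc j))^2 / (2 * real n)))"
      using n by (simp add: field_simps power2_eq_square flip: exp_add)
    finally show ?thesis .
  qed
qed

lemma binom_le_gaussian:
  assumes "n \<ge> 1" "b \<ge> 0"
  shows "real (binom (2 * n) (int n + b))
           \<le> 4 ^ n / sqrt (real n) * exp (- ((real_of_int b)^2 / (2 * real n)))"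
proof -
  have "real (binom (2 * n) (int n + b)) = real ((2 * n) choose (n + nat b))"
    using assms by (auto simp: binom_def binomial_eq_0 nat_add_distrib)
  also have "\<dots> \<le> real ((2 * n) choose n) * exp (- ((real (nat b))^2 / (2 * real n)))"
    by (rule binomial_gaussian_decay[OF assms(1)])
  also have "\<dots> \<le> 4 ^ n / sqrt (real n) * exp (- ((real (nat b))^2 / (2 * real n)))"
    using assms by (intro mult_right_mono central_binomial_le) auto
  finally show ?thesis
    using assms by simp
qed

lemma arctan_diff_ge:
  fixes x y :: real
  assumes "0 \<le> x" "x \<le> y"
  shows "(y - x) / (1 + y^2) \<le> arctan y - arctan x"
proof (cases "x = y")
  case False
  then obtain z where z: "x < z" "z < y" "arctan y - arctan x = (y - x) * inverse (1 + z^2)"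
    using assms MVT2[of x y arctan "\<lambda>z. inverse (1 + z^2)"] DERIV_arctan by force
  have "1 + z^2 \<le> 1 + y^2"
    using assms z by (intro add_left_mono power_mono) auto
  then have "(y - x) / (1 + y^2) \<le> (y - x) / (1 + z^2)"
    using assms by (intro divide_left_mono) (auto intro!: mult_pos_pos add_pos_nonneg)
  then show ?thesis
    by (simp add: z(3) divide_inverse)
qed simp

(* Each term is at most the increment of arctan (sqrt a * x) / sqrt a over [r - 1, r],
   so the sum telescopes. *)
lemma sum_inverse_one_plus_sq_le:
  fixes a :: real
  assumes "a > 0"
  shows "(\<Sum>r=1..M. 1 / (1 + a * (real r)^2)) \<le> pi / (2 * sqrt a)"
proof -
  define F where "F r = arctan (sqrt a * real r) / sqrt a" for r
  have "(\<Sum>r=1..M. 1 / (1 + a * (real r)^2)) = (\<Sum>r<M. 1 / (1 + a * (real (Suc r))^2))"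
    using sum.atLeast1_atMost_eq[of "\<lambda>r. 1 / (1 + a * (real r)^2)" M] by simp
  also have "\<dots> \<le> (\<Sum>r<M. F (Suc r) - F r)"
  proof (intro sum_mono)
    fix r
    have "sqrt a / (1 + a * (real (Suc r))^2)
        = (sqrt a * real (Suc r) - sqrt a * real r) / (1 + (sqrt a * real (Suc r))^2)"
      using assms by (simp add: power_mult_distrib right_diff_distrib[symmetric])
    also have "\<dots> \<le> arctan (sqrt a * real (Suc r)) - arctan (sqrt a * real r)"
      using assms by (intro arctan_diff_ge) auto
    finally show "1 / (1 + a * (real (Suc r))^2) \<le> F (Suc r) - F r"
      using assms by (simp add: F_def divide_simps mult.commute)
  qed
  also have "\<dots> = F M"
    by (subst sum_lessThan_telescope) (simp add: F_def)
  also have "\<dots> \<le> pi / (2 * sqrt a)"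
    using arctan_ubound[of "sqrt a * real M"] assms by (simp add: F_def divide_simps)
  finally show ?thesis .
qed

lemma int_interval_eq_image: "{1..K::int} = int ` {1..nat K}"
  by (cases "K \<ge> 0") (auto simp: image_int_atLeastAtMost)

lemma sum_exp_neg_sq_le:
  fixes a :: real
  assumes "a > 0"
  shows "(\<Sum>r\<in>{1..K::int}. exp (- (a * (real_of_int r)^2))) \<le> 2 / sqrt a"
proof -
  have "(\<Sum>r\<in>{1..K}. exp (- (a * (real_of_int r)^2)))
      = (\<Sum>r=1..nat K. exp (- (a * (real r)^2)))"
    unfolding int_interval_eq_image by (subst sum.reindex) auto
  also have "\<dots> \<le> (\<Sum>r=1..nat K. 1 / (1 + a * (real r)^2))"
  proof (intro sum_mono)
    fix r
    have "1 + a * (real r)^2 \<le> exp (a * (real r)^2)"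
      by (rule exp_ge_add_one_self)
    then show "exp (- (a * (real r)^2)) \<le> 1 / (1 + a * (real r)^2)"
      using assms by (simp add: exp_minus field_simps add_pos_nonneg)
  qed
  also have "\<dots> \<le> pi / (2 * sqrt a)"
    using assms by (rule sum_inverse_one_plus_sq_le)
  also have "\<dots> \<le> 2 / sqrt a"
    using pi_less_4 assms by (simp add: divide_simps)
  finally show ?thesis .
qed

lemma sum_inverse_int_le_ln:
  fixes m :: real
  assumes "1 \<le> m" "real_of_int K \<le> m"
  shows "(\<Sum>k\<in>{1..K}. 1 / real_of_int k) \<le> 1 + ln m"
proof -
  have "(\<Sum>k\<in>{1..K}. 1 / real_of_int k) = harm (nat K)"
    unfolding int_interval_eq_image harm_def by (subst sum.reindex) (auto simp: divide_inverse)
  also have "\<dots> \<le> 1 + ln m"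
  proof (cases "K \<ge> 1")
    case True
    have "harm (nat K) - ln (real (nat K)) \<le> harm 1 - ln (real (1::nat))"
      using euler_mascheroni_sequence_decreasing[of 1 "nat K"] True by simp
    also have "\<dots> = 1" by (simp add: harm_def)
    moreover have "ln (real (nat K)) \<le> ln m"
      using True assms by simp
    ultimately show ?thesis
      by simp
  qed (use assms in \<open>simp add: harm_def\<close>)
  finally show ?thesis .
qed

lemma div4_ge_fifth:
  fixes T :: int
  assumes "20 \<le> T"
  shows "real_of_int T / 5 \<le> real_of_int ((T + (-1) ^ p) div 4)"
proof -
  have "- 1 \<le> ((-1::int) ^ p)"
    by (cases "even p") auto
  moreover have "T + (-1) ^ p - 3 \<le> 4 * ((T + (-1) ^ p) div 4)"
    using pos_mod_bound[of 4 "T + (-1) ^ p"] div_mult_mod_eq[of "T + (-1) ^ p" 4] by linarith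
  ultimately have "4 * T \<le> 20 * ((T + (-1) ^ p) div 4)"
    using assms by linarith
  then show ?thesis
    by (simp flip: of_int_le_iff)
qed

lemma exp_gaussian_le_split:
  fixes N T j :: real and n :: nat
  assumes "n \<ge> 1" "0 < N" "N * sqrt (real n) \<le> T" "T / 5 \<le> j"
  shows "exp (- (j^2 / (2 * real n)))
           \<le> exp (- (N^2 / 100)) * exp (- (N / (100 * sqrt (real n)) * T))"
proof -
  define \<sigma> where "\<sigma> = sqrt (real n)"
  have n\<sigma>: "real n = \<sigma>^2" and "0 < \<sigma>"
    using assms(1) by (auto simp: \<sigma>_def)
  then have N\<sigma>: "0 < N * \<sigma>"
    using assms(2) by simp
  then have T: "0 < T"
    using assms(3) unfolding \<sigma>_def by linarith
  have "(N * \<sigma>) * (N * \<sigma>) \<le> T * T" "(N * \<sigma>) * T \<le> T * T"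
    using assms N\<sigma> unfolding \<sigma>_def[symmetric] by (auto intro: mult_mono)
  then have "(N * \<sigma>)^2 + (N * \<sigma>) * T \<le> 2 * T^2"
    by (simp add: power2_eq_square)
  also have "\<dots> \<le> 50 * j^2"
    using power_mono[of "T / 5" j 2] assms T by (simp add: power_divide)
  finally have "((N * \<sigma>)^2 + (N * \<sigma>) * T) / (100 * \<sigma>^2) \<le> 50 * j^2 / (100 * \<sigma>^2)"
    by (intro divide_right_mono) auto
  moreover have "((N * \<sigma>)^2 + (N * \<sigma>) * T) / (100 * \<sigma>^2)
      = N^2 / 100 + N / (100 * \<sigma>) * T"
    using \<open>0 < \<sigma>\<close> by (simp add: field_simps power2_eq_square)
  ultimately have "N^2 / 100 + N / (100 * \<sigma>) * T \<le> j^2 / (2 * real n)"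
    unfolding n\<sigma> by simp
  then show ?thesis
    unfolding \<sigma>_def[symmetric] by (simp flip: exp_add)
qed

lemma binom_quarter_offset_le:
  fixes T :: int and n N :: nat
  assumes n: "n \<ge> 1" and N: "N \<ge> 20" and TN: "real N * sqrt (real n) < real_of_int T"
  shows "real (binom (2 * n) (int n + (T + (-1) ^ p) div 4))
           \<le> 4 ^ n / sqrt (real n) * (exp (- ((real N)^2 / 100)) *
                                          exp (- (real N / (100 * sqrt (real n)) * real_of_int T)))"
proof -
  define b where "b = (T + (-1) ^ p) div 4"
  have "real N * 1 \<le> real N * sqrt (real n)"
    using n by (intro mult_left_mono) auto
  moreover have "20 \<le> real N"
    using N by simp
  ultimately have T20: "(20::real) \<le> real_of_int T"
    using TN by linarith
  then have "20 \<le> T"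
    by simp
  then have bT: "real_of_int T / 5 \<le> real_of_int b"
    unfolding b_def by (rule div4_ge_fifth)
  with T20 have "0 \<le> real_of_int b"
    by linarith
  then have "real (binom (2 * n) (int n + b))
      \<le> 4 ^ n / sqrt (real n) * exp (- ((real_of_int b)^2 / (2 * real n)))"
    using n by (intro binom_le_gaussian) auto
  also have "\<dots> \<le> 4 ^ n / sqrt (real n) *
      (exp (- ((real N)^2 / 100)) * exp (- (real N / (100 * sqrt (real n)) * real_of_int T)))"
    using bT TN n N by (intro mult_left_mono exp_gaussian_le_split) auto
  finally show ?thesis
    unfolding b_def .
qed

lemma Sigma2_summand_le:
  fixes k r s :: int and n N :: nat
  assumes n: "n \<ge> 1" and N: "N \<ge> 20" and pos: "0 < k" "0 < s" "s < r"
    and large: "real N * sqrt (real n) < real_of_int (k * (r^2 + s^2))"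
  shows "real (binom (2 * n) (int n + (k * r * s) div 2)) *
         real (binom (2 * n) (int n + (k * r^2 + k * s^2 + (-1) ^ nat ((k + 1) div 2)) div 4))
       \<le> 16 ^ n / real n * exp (- ((real N)^2 / 100)) *
         (exp (- (real N / (100 * sqrt (real n)) * real_of_int k * (real_of_int r)^2)) *
          exp (- (real N / (100 * sqrt (real n)) * real_of_int k * (real_of_int s)^2)))"
proof -
  define T where "T = k * r^2 + k * s^2"
  have "real (binom (2 * n) (int n + (k * r * s) div 2))
      \<le> 4 ^ n / sqrt (real n) * exp (- ((real_of_int ((k * r * s) div 2))^2 / (2 * real n)))"
    using pos n by (intro binom_le_gaussian) auto
  also have "\<dots> \<le> 4 ^ n / sqrt (real n)"
    by (rule mult_left_le) auto
  finally have first: "real (binom (2 * n) (int n + (k * r * s) div 2)) \<le> 4 ^ n / sqrt (real n)" .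
  have "real N * sqrt (real n) < real_of_int T"
    using large by (simp add: T_def algebra_simps)
  note second = binom_quarter_offset_le[OF n N this, of "nat ((k + 1) div 2)"]
  have "4 ^ n / sqrt (real n) * (4 ^ n / sqrt (real n) * x) = (16::real) ^ n / real n * x" for x
    using n by (simp flip: power_mult_distrib)
  moreover have "exp (- (real N / (100 * sqrt (real n)) * real_of_int T))
      = exp (- (real N / (100 * sqrt (real n)) * real_of_int k * (real_of_int r)^2)) *
        exp (- (real N / (100 * sqrt (real n)) * real_of_int k * (real_of_int s)^2))"
    by (simp add: T_def algebra_simps flip: exp_add)
  moreover have "real (binom (2 * n) (int n + (k * r * s) div 2)) *
      real (binom (2 * n) (int n + (T + (-1) ^ nat ((k + 1) div 2)) div 4))
      \<le> 4 ^ n / sqrt (real n) * (4 ^ n / sqrt (real n) *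
          (exp (- ((real N)^2 / 100)) * exp (- (real N / (100 * sqrt (real n)) * real_of_int T))))"
    using first second by (intro mult_mono) auto
  ultimately show ?thesis
    unfolding T_def by (simp only: mult.assoc)
qed

lemma B_subset_cube: "B t \<subseteq> {1..\<lfloor>t\<rfloor>} \<times> {1..\<lfloor>t\<rfloor>} \<times> {1..\<lfloor>t\<rfloor>}"
proof clarify
  fix k r s assume "(k, r, s) \<in> B t"
  then have pos: "0 < k" "0 < s" "s < r" and T: "real_of_int (k * (r^2 + s^2)) \<le> t"
    by (auto simp: B_def)
  have bound: "k * (r^2 + s^2) \<le> \<lfloor>t\<rfloor>"
    using T by (simp add: le_floor_iff)
  have sq: "r \<le> r^2" "s \<le> s^2"
    using pos by (simp_all add: power2_eq_square)
  then have "1 \<le> r^2 + s^2"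
    using pos by (smt (verit) zero_le_power2)
  then have "r^2 + s^2 \<le> k * (r^2 + s^2)" "k \<le> k * (r^2 + s^2)"
    using pos mult_right_mono[of 1 k "r^2 + s^2"] mult_left_mono[of 1 "r^2 + s^2" k] by simp_all
  then have "k \<le> \<lfloor>t\<rfloor>" "r \<le> \<lfloor>t\<rfloor>" "s \<le> \<lfloor>t\<rfloor>"
    using bound sq by (smt (verit) zero_le_power2)+
  then show "k \<in> {1..\<lfloor>t\<rfloor>} \<and> (r, s) \<in> {1..\<lfloor>t\<rfloor>} \<times> {1..\<lfloor>t\<rfloor>}"
    using pos by auto
qed

lemma sum_cube_exp_le:
  fixes c :: real
  assumes "c > 0"
  shows "(\<Sum>(k, r, s)\<in>{1..K} \<times> {1..K} \<times> {1..K}.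
            exp (- (c * real_of_int k * (real_of_int r)^2)) *
            exp (- (c * real_of_int k * (real_of_int s)^2)))
       \<le> 4 / c * (\<Sum>k\<in>{1..K}. 1 / real_of_int k)"
proof -
  have "(\<Sum>(k, r, s)\<in>{1..K} \<times> {1..K} \<times> {1..K}.
            exp (- (c * real_of_int k * (real_of_int r)^2)) *
            exp (- (c * real_of_int k * (real_of_int s)^2)))
      = (\<Sum>k\<in>{1..K}. (\<Sum>r\<in>{1..K}. exp (- (c * real_of_int k * (real_of_int r)^2))) *
                      (\<Sum>s\<in>{1..K}. exp (- (c * real_of_int k * (real_of_int s)^2))))"
    by (simp add: sum.cartesian_product[symmetric] sum_product)
  also have "\<dots> \<le> (\<Sum>k\<in>{1..K}. 2 / sqrt (c * real_of_int k) * (2 / sqrt (c * real_of_int k)))"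
    using assms by (intro sum_mono mult_mono sum_exp_neg_sq_le) (auto intro: sum_nonneg)
  also have "\<dots> = 4 / c * (\<Sum>k\<in>{1..K}. 1 / real_of_int k)"
    using assms by (simp add: sum_distrib_left)
  finally show ?thesis .
qed

lemma one_le_cutoff:
  assumes "n \<ge> 2"
  shows "1 \<le> 5 * sqrt (real n * ln (real n))"
proof -
  have "1 \<le> 2 * ln (2::real)"
    using ln2_ge_two_thirds by simp
  also have "\<dots> \<le> real n * ln (real n)"
    using assms by (intro mult_mono) auto
  finally have "1 \<le> sqrt (real n * ln (real n))"
    by simp
  then show ?thesis
    by linarith
qed

lemma Sigma2_le:
  fixes n N :: nat
  assumes n: "n \<ge> 2" and N: "N \<ge> 20"
  shows "Sigma2 n N \<le> 400 * exp (- ((real N)^2 / 100)) / real N * (16 ^ n / sqrt (real n)) *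
                        (1 + ln (5 * sqrt (real n * ln (real n))))"
proof -
  define m where "m = 5 * sqrt (real n * ln (real n))"
  define c where "c = real N / (100 * sqrt (real n))"
  define C where "C = 16 ^ n / real n * exp (- ((real N)^2 / 100))"
  define cube where "cube = {1..\<lfloor>m\<rfloor>} \<times> {1..\<lfloor>m\<rfloor>} \<times> {1..\<lfloor>m\<rfloor>}"
  define g where "g = (\<lambda>(k, r, s). C * (exp (- (c * real_of_int k * (real_of_int r)^2)) *
                                      exp (- (c * real_of_int k * (real_of_int s)^2))))"
  have c0: "c > 0"
    using n N by (simp add: c_def)
  have m1: "1 \<le> m"
    unfolding m_def using n by (rule one_le_cutoff)
  have "Sigma2 n N \<le> (\<Sum>x\<in>B m - B (real N * sqrt (real n)). g x)"
    unfolding Sigma2_def m_def[symmetric]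
  proof (rule sum_mono, clarify)
    fix k r s assume "(k, r, s) \<in> B m" "(k, r, s) \<notin> B (real N * sqrt (real n))"
    then have "0 < k" "0 < s" "s < r" "real N * sqrt (real n) < real_of_int (k * (r^2 + s^2))"
      by (auto simp: B_def)
    then show "real (binom (2 * n) (int n + k * r * s div 2)) *
        real (binom (2 * n) (int n + (k * r^2 + k * s^2 + (-1) ^ nat ((k + 1) div 2)) div 4))
        \<le> g (k, r, s)"
      using Sigma2_summand_le[of n N k s r] n N by (simp add: g_def C_def c_def)
  qed
  also have "\<dots> \<le> (\<Sum>x\<in>cube. g x)"
    using B_subset_cube[of m] by (intro sum_mono2) (auto simp: cube_def g_def C_def)
  also have "\<dots> = C * (\<Sum>(k, r, s)\<in>cube.
      exp (- (c * real_of_int k * (real_of_int r)^2)) *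
      exp (- (c * real_of_int k * (real_of_int s)^2)))"
    by (simp add: g_def sum_distrib_left case_prod_beta)
  also have "\<dots> \<le> C * (4 / c * (\<Sum>k\<in>{1..\<lfloor>m\<rfloor>}. 1 / real_of_int k))"
    using sum_cube_exp_le[OF c0] by (intro mult_left_mono) (auto simp: C_def cube_def)
  also have "\<dots> \<le> C * (4 / c * (1 + ln m))"
    using sum_inverse_int_le_ln[OF m1] c0 by (intro mult_left_mono) (auto simp: C_def)
  also have "\<dots> = 400 * exp (- ((real N)^2 / 100)) / real N * (16 ^ n / sqrt (real n)) *
                    (1 + ln m)"
  proof -
    define \<sigma> where "\<sigma> = sqrt (real n)"
    have "real n = \<sigma>^2" "\<sigma> > 0"
      using n by (auto simp: \<sigma>_def)
    then show ?thesis
      using N unfolding C_def c_def \<sigma>_def[symmetric] by (simp add: field_simps power2_eq_square)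
  qed
  finally show ?thesis
    by (simp add: m_def)
qed

lemma limsup_tendsto_zero_if_bounded:
  fixes f :: "nat \<Rightarrow> nat \<Rightarrow> real"
  assumes nonneg: "\<And>N. eventually (\<lambda>n. 0 \<le> f N n) sequentially"
    and bound: "eventually (\<lambda>N. eventually (\<lambda>n. f N n \<le> h N) sequentially) sequentially"
    and h: "h \<longlonglongrightarrow> 0"
  shows "((\<lambda>N. limsup (\<lambda>n. ereal (f N n))) \<longlongrightarrow> ereal 0) sequentially"
proof (rule tendsto_sandwich)
  show "eventually (\<lambda>N. ereal 0 \<le> limsup (\<lambda>n. ereal (f N n))) sequentially"
  proof (intro always_eventually allI, rule le_Limsup)
    show "eventually (\<lambda>n. ereal 0 \<le> ereal (f N n)) sequentially" for N
      using nonneg[of N] by eventually_elim simp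
  qed simp
  show "eventually (\<lambda>N. limsup (\<lambda>n. ereal (f N n)) \<le> ereal (h N)) sequentially"
    using bound by eventually_elim (intro Limsup_bounded, auto elim: eventually_mono)
  show "((\<lambda>N. ereal (h N)) \<longlongrightarrow> ereal 0) sequentially"
    using h by (simp add: lim_ereal)
qed simp

lemma Sigma2_nonneg: "0 \<le> Sigma2 n N"
  unfolding Sigma2_def by (intro sum_nonneg) (auto split: prod.split)

lemma Sigma2_ratio_le:
  fixes n N :: nat
  assumes n: "n \<ge> 2" and N: "N \<ge> 20"
    and log: "1 + ln (5 * sqrt (real n * ln (real n))) \<le> 2 * ln (real n)"
  shows "Sigma2 n N / (16 ^ n * ln (real n) / sqrt (real n))
           \<le> 800 * exp (- ((real N)^2 / 100)) / real N"
proof -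
  have D: "0 < 16 ^ n * ln (real n) / sqrt (real n)"
    using n by simp
  have "Sigma2 n N \<le> 400 * exp (- ((real N)^2 / 100)) / real N * (16 ^ n / sqrt (real n)) *
                        (1 + ln (5 * sqrt (real n * ln (real n))))"
    using n N by (rule Sigma2_le)
  also have "\<dots> \<le> 400 * exp (- ((real N)^2 / 100)) / real N * (16 ^ n / sqrt (real n)) *
                    (2 * ln (real n))"
    using log by (intro mult_left_mono) auto
  also have "\<dots> = 800 * exp (- ((real N)^2 / 100)) / real N *
                    (16 ^ n * ln (real n) / sqrt (real n))"
    by (simp add: field_simps)
  finally show ?thesis
    by (rule pos_divide_le_eq[OF D, THEN iffD2])
qed

theorem lemma4p1:
  shows "((\<lambda>N::nat. limsup (\<lambda>n::nat.
            ereal (Sigma2 n N / (16 ^ n * ln (real n) / sqrt (real n)))))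
          \<longlongrightarrow> ereal 0) sequentially"
proof (rule limsup_tendsto_zero_if_bounded)
  show "(\<lambda>N. 800 * exp (- ((real N)^2 / 100)) / real N) \<longlonglongrightarrow> 0"
    by real_asymp
  have "eventually (\<lambda>n::nat. 1 + ln (5 * sqrt (real n * ln (real n))) \<le> 2 * ln (real n))
          sequentially"
    by real_asymp
  then have bound: "eventually (\<lambda>n. Sigma2 n N / (16 ^ n * ln (real n) / sqrt (real n))
               \<le> 800 * exp (- ((real N)^2 / 100)) / real N) sequentially" if "N \<ge> 20" for N
    using eventually_ge_at_top[of 2] by eventually_elim (use that Sigma2_ratio_le in auto)
  show "eventually (\<lambda>N. eventually (\<lambda>n. Sigma2 n N / (16 ^ n * ln (real n) / sqrt (real n))
               \<le> 800 * exp (- ((real N)^2 / 100)) / real N) sequentially) sequentially"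
    using eventually_ge_at_top[of "20::nat"] by (rule eventually_mono) (rule bound)
  show "eventually (\<lambda>n. 0 \<le> Sigma2 n N / (16 ^ n * ln (real n) / sqrt (real n))) sequentially"
    for N
    using eventually_ge_at_top[of 1] by eventually_elim (simp add: Sigma2_nonneg)
qed

end
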